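(* Consider a fleet of $N^{\mathrm{B}}$ buildings indexed by $b\in\{1,\dots,N^{\mathrm{B}}\}$, building $b$ having $N_b^{\mathrm{I}}$ zones, over periods $t\in\{1,\dots,N^{\mathrm{T}}\}$. Fix a period $t$, and for each building $b$ fix a current state $\mathbf{T}^{\mathrm{in}}_{b,t-1}\in\mathbb{R}^{N_b^{\mathrm{I}}}$ and a realized exogenous vector $\mathbf{W}_{b,t}\in\mathcal{W}_{b,t}$. Let $\widetilde{\mathcal{U}}_{b,t}$ denote the set of pairs $[\mathbf{T}^{\mathrm{in}}_{b,t};\mathbf{P}^{\mathrm{ac}}_{b,t}]\in\mathbb{R}^{2N_b^{\mathrm{I}}}$ satisfying $\mathbf{A}^{\mathrm{eq}1}_{b,t}\mathbf{T}^{\mathrm{in}}_{b,t-1}+\mathbf{A}^{\mathrm{eq}2}_{b,t}\mathbf{T}^{\mathrm{in}}_{b,t}+\mathbf{A}^{\mathrm{eq}3}_{b,t}\mathbf{P}^{\mathrm{ac}}_{b,t}+\mathbf{A}^{\mathrm{eq}4}_{b,t}\mathbf{W}_{b,t}=\mathbf{b}^{\mathrm{eq}}_{b,t}$, $\mathbf{A}^{\mathrm{ieq}1}_{b,t}\mathbf{T}^{\mathrm{in}}_{b,t}+\mathbf{A}^{\mathrm{ieq}2}_{b,t}\mathbf{P}^{\mathrm{ac}}_{b,t}\le\mathbf{b}^{\mathrm{ieq}}_{b,t}$, and $\mathbf{T}^{\mathrm{in}}_{b,t}\in\mathcal{T}^{\mathrm{aff}}_{b,t}$, where $\mathcal{T}^{\mathrm{aff}}_{b,t}=\mathbf{\Gamma}^{\mathrm{aff}}_{b,t}\{\mathbf{z}:\|\mathbf{z}\|_\infty\le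 1\}+\boldsymbol{\gamma}^{\mathrm{aff}}_{b,t}$ is a polytope satisfying $\mathcal{T}^{\mathrm{aff}}_{b,t}\subseteq\mathcal{T}^{\mathrm{rch}}_{b,t}$. For each $b$, let $[\mathbf{T}^{\mathrm{in},\uparrow}_{b,t};\mathbf{P}^{\mathrm{ac},\uparrow}_{b,t}]$ and $[\mathbf{T}^{\mathrm{in},\downarrow}_{b,t};\mathbf{P}^{\mathrm{ac},\downarrow}_{b,t}]$ be (parts of) an optimal solution of the linear program that maximizes $P^{\mathrm{bld},\uparrow}_{b,t}-P^{\mathrm{bld},\downarrow}_{b,t}$ subject to $P^{\mathrm{bld},\uparrow}_{b,t}=\sum_{i=1}^{N_b^{\mathrm{I}}}P^{\mathrm{ac},\uparrow}_{b,i,t}$, $P^{\mathrm{bld},\downarrow}_{b,t}=\sum_{i=1}^{N_b^{\mathrm{I}}}P^{\mathrm{ac},\downarrow}_{b,i,t}$, and both $[\mathbf{T}^{\mathrm{in},\uparrow}_{b,t};\mathbf{P}^{\mathrm{ac},\uparrow}_{b,t}]$ and $[\mathbf{T}^{\mathrm{in},\downarrow}_{b,t};\mathbf{P}^{\mathrm{ac},\downarrow}_{b,t}]$ belonging to $\widetilde{\mathcal{U}}_{b,t}$ (with $P^{\mathrm{bld},\uparrow}_{b,t}$, $P^{\mathrm{bld},\downarrow}_{b,t}$ the corresponding optimal values of these sums). Assume $\sum_{b}P^{\mathrm{bld},\uparrow}_{b,t}>\sum_{b}P^{\mathrm{bld},\downarrow}_{b,t}$. Given any $P^{\mathrm{reg}}_t\in\left[\sum_{b=1}^{N^{\mathrm{B}}}P^{\mathrm{bld},\downarrow}_{b,t},\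 \sum_{b=1}^{N^{\mathrm{B}}}P^{\mathrm{bld},\uparrow}_{b,t}\right]$, define $$\lambda_t:=\frac{P^{\mathrm{reg}}_t-\sum_{b=1}^{N^{\mathrm{B}}}P^{\mathrm{bld},\downarrow}_{b,t}}{\sum_{b=1}^{N^{\mathrm{B}}}P^{\mathrm{bld},\uparrow}_{b,t}-\sum_{b=1}^{N^{\mathrm{B}}}P^{\mathrm{bld},\downarrow}_{b,t}}\in[0,1],$$ and for each building $b$ set $$[\mathbf{T}^{\mathrm{in}}_{b,t};\mathbf{P}^{\mathrm{ac}}_{b,t}]=(1-\lambda_t)[\mathbf{T}^{\mathrm{in},\downarrow}_{b,t};\mathbf{P}^{\mathrm{ac},\downarrow}_{b,t}]+\lambda_t[\mathbf{T}^{\mathrm{in},\uparrow}_{b,t};\mathbf{P}^{\mathrm{ac},\uparrow}_{b,t}].$$ Then: (i) for every $b$, $[\mathbf{T}^{\mathrm{in}}_{b,t};\mathbf{P}^{\mathrm{ac}}_{b,t}]\in\widetilde{\mathcal{U}}_{b,t}$, so the thermal dynamics, comfort and power constraints at period $t$ hold; (ii) $\sum_{b=1}^{N^{\mathrm{B}}}\sum_{i=1}^{N_b^{\mathrm{I}}}P^{\mathrm{ac}}_{b,i,t}=P^{\mathrm{reg}}_t$; and (iii) for every $b$, $\mathbf{T}^{\mathrm{in}}_{b,t}\in\mathcal{T}^{\mathrm{rch}}_{b,t}$, i.e., there exists a feasible causal continuation over the remaining horizon for all admissible future realizations of the exogenous inputs. Moreover, this profile depends only on the current states $\mathbf{T}^{\mathrm{in}}_{b,t-1}$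 and current realizations $\mathbf{W}_{b,t}$.
   Context: Model of a multi-zone HVAC building $b$: indoor temperature vector $\mathbf{T}^{\mathrm{in}}_{b,t}\in\mathbb{R}^{N_b^{\mathrm{I}}}$ and HVAC power vector $\mathbf{P}^{\mathrm{ac}}_{b,t}\in\mathbb{R}^{N_b^{\mathrm{I}}}$ (components $P^{\mathrm{ac}}_{b,i,t}$) at period $t$; exogenous input $\mathbf{W}_{b,t}=[T^{\mathrm{out}}_{b,t};Q^{\mathrm{rad}}_{b,t}]\in\mathbb{R}^2$ (outdoor temperature, solar radiation) ranges over the box $\mathcal{W}_{b,t}=\{\mathbf{W}:\underline{\mathbf{W}}_{b,t}\le\mathbf{W}\le\overline{\mathbf{W}}_{b,t}\}$. The per-period constraints are the linear thermal dynamics $\mathbf{A}^{\mathrm{eq}1}_{b,t}\mathbf{T}^{\mathrm{in}}_{b,t-1}+\mathbf{A}^{\mathrm{eq}2}_{b,t}\mathbf{T}^{\mathrm{in}}_{b,t}+\mathbf{A}^{\mathrm{eq}3}_{b,t}\mathbf{P}^{\mathrm{ac}}_{b,t}+\mathbf{A}^{\mathrm{eq}4}_{b,t}\mathbf{W}_{b,t}=\mathbf{b}^{\mathrm{eq}}_{b,t}$ (given matrices/vectors) and the comfort/power limits $\mathbf{A}^{\mathrm{ieq}1}_{b,t}\mathbf{T}^{\mathrm{in}}_{b,t}+\mathbf{A}^{\mathrm{ieq}2}_{b,t}\mathbf{P}^{\mathrm{ac}}_{b,t}\le\mathbf{b}^{\mathrm{ieq}}_{b,t}$ (encoding box bounds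 on each zone temperature and zone power). Backward reachable sets: $\mathcal{T}^{\mathrm{rch}}_{b,N^{\mathrm{T}}}:=\mathbb{R}^{N_b^{\mathrm{I}}}$, and for $t\in\{1,\dots,N^{\mathrm{T}}\}$, $\mathcal{T}^{\mathrm{rch}}_{b,t-1}$ is the set of $\mathbf{T}^{\mathrm{in}}_{b,t-1}$ such that for every $\mathbf{W}_{b,t}\in\mathcal{W}_{b,t}$ there exist $\mathbf{T}^{\mathrm{in}}_{b,t},\mathbf{P}^{\mathrm{ac}}_{b,t}$ satisfying the dynamics equation and limit inequalities at period $t$ together with $\mathbf{T}^{\mathrm{in}}_{b,t}\in\mathcal{T}^{\mathrm{rch}}_{b,t}$. "Feasible causal continuation over the remaining horizon" means membership in these reachable sets. *)

theory Defs
  imports Complex_Main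
begin

text \<open>Vectors of R^n are represented as functions nat => real of which only the
components with index < n matter; matrices as nat => nat => real (row, column).
All per-period data are indexed by the period t.\<close>

record hvac_model =
  nz    :: nat
  meq   :: "nat \<Rightarrow> nat"
  Aeq1  :: "nat \<Rightarrow> nat \<Rightarrow> nat \<Rightarrow> real"    (* t, row, column *)
  Aeq2  :: "nat \<Rightarrow> nat \<Rightarrow> nat \<Rightarrow> real"
  Aeq3  :: "nat \<Rightarrow> nat \<Rightarrow> nat \<Rightarrow> real"
  Aeq4  :: "nat \<Rightarrow> nat \<Rightarrow> nat \<Rightarrow> real"    (* columns 0,1 : T_out, Q_rad *)
  beq   :: "nat \<Rightarrow> nat \<Rightarrow> real"
  mieq  :: "nat \<Rightarrow> nat"
  Aieq1 :: "nat \<Rightarrow> nat \<Rightarrow> nat \<Rightarrow> real"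
  Aieq2 :: "nat \<Rightarrow> nat \<Rightarrow> nat \<Rightarrow> real"
  bieq  :: "nat \<Rightarrow> nat \<Rightarrow> real"
  Wlo   :: "nat \<Rightarrow> nat \<Rightarrow> real"
  Whi   :: "nat \<Rightarrow> nat \<Rightarrow> real"

definition Wbox :: "hvac_model \<Rightarrow> nat \<Rightarrow> (nat \<Rightarrow> real) set" where
  "Wbox M t = {W. \<forall>k<2. Wlo M t k \<le> W k \<and> W k \<le> Whi M t k}"

definition dyn_ok :: "hvac_model \<Rightarrow> nat \<Rightarrow> (nat \<Rightarrow> real) \<Rightarrow> (nat \<Rightarrow> real)
    \<Rightarrow> (nat \<Rightarrow> real) \<Rightarrow> (nat \<Rightarrow> real) \<Rightarrow> bool" where
  "dyn_ok M t Tprev W T P \<longleftrightarrow>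
     (\<forall>r < meq M t.
        (\<Sum>j<nz M. Aeq1 M t r j * Tprev j) + (\<Sum>j<nz M. Aeq2 M t r j * T j)
      + (\<Sum>j<nz M. Aeq3 M t r j * P j) + (\<Sum>k<2. Aeq4 M t r k * W k) = beq M t r)"

definition lim_ok :: "hvac_model \<Rightarrow> nat \<Rightarrow> (nat \<Rightarrow> real) \<Rightarrow> (nat \<Rightarrow> real) \<Rightarrow> bool" where
  "lim_ok M t T P \<longleftrightarrow>
     (\<forall>r < mieq M t.
        (\<Sum>j<nz M. Aieq1 M t r j * T j) + (\<Sum>j<nz M. Aieq2 M t r j * P j) \<le> bieq M t r)"

definition step_ok :: "hvac_model \<Rightarrow> nat \<Rightarrow> (nat \<Rightarrow> real) \<Rightarrow> (nat \<Rightarrow> real)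
    \<Rightarrow> (nat \<Rightarrow> real) \<Rightarrow> (nat \<Rightarrow> real) \<Rightarrow> bool" where
  "step_ok M t Tprev W T P \<longleftrightarrow> dyn_ok M t Tprev W T P \<and> lim_ok M t T P"

text \<open>Backward reachable sets: rch_aux M NT k is the set T^rch_{NT-k}.\<close>
fun rch_aux :: "hvac_model \<Rightarrow> nat \<Rightarrow> nat \<Rightarrow> (nat \<Rightarrow> real) set" where
  "rch_aux M NT 0 = UNIV"
| "rch_aux M NT (Suc k) =
     {Tprev. \<forall>W \<in> Wbox M (NT - k). \<exists>T P. step_ok M (NT - k) Tprev W T P \<and> T \<in> rch_aux M NT k}"

definition rch :: "hvac_model \<Rightarrow> nat \<Rightarrow> nat \<Rightarrow> (nat \<Rightarrow> real) set" where
  "rch M NT t = rch_aux M NT (NT - t)"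

definition Taff :: "nat \<Rightarrow> nat \<Rightarrow> (nat \<Rightarrow> nat \<Rightarrow> real) \<Rightarrow> (nat \<Rightarrow> real) \<Rightarrow> (nat \<Rightarrow> real) set" where
  "Taff n q \<Gamma> \<gamma> = {T. \<exists>z. (\<forall>j<q. \<bar>z j\<bar> \<le> 1) \<and> (\<forall>i<n. T i = (\<Sum>j<q. \<Gamma> i j * z j) + \<gamma> i)}"

definition Utilde :: "hvac_model \<Rightarrow> nat \<Rightarrow> (nat \<Rightarrow> real) \<Rightarrow> (nat \<Rightarrow> real)
    \<Rightarrow> (nat \<Rightarrow> real) set \<Rightarrow> ((nat \<Rightarrow> real) \<times> (nat \<Rightarrow> real)) set" where
  "Utilde M t Tprev W A = {(T, P). step_ok M t Tprev W T P \<and> T \<in> A}"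

end

theory Submission
  imports Defs
begin

text \<open>The set of feasible pairs at period t is convex: the dynamics are affine, the limits
linear and the polytope T^aff is the affine image of a cube. Hence the componentwise convex
combination of the two extreme solutions is feasible, lies in T^aff and therefore in T^rch,
and its total power is affine in the weight, which was chosen to hit the regulation signal.\<close>

definition interp :: "real \<Rightarrow> ('a \<Rightarrow> real) \<Rightarrow> ('a \<Rightarrow> real) \<Rightarrow> 'a \<Rightarrow> real" where
  "interp l x y = (\<lambda>i. (1 - l) * x i + l * y i)"

lemma sum_mult_interp:
  "(\<Sum>j\<in>A. c j * interp l x y j) = (1 - l) * (\<Sum>j\<in>A. c j * x j) + l * (\<Sum>j\<in>A. c j * y j)"
proof -
  have "(\<Sum>j\<in>A. c j * interp l x y j) = (\<Sum>j\<in>A. (1 - l) * (c j * x j) + l * (c j * y j))"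
    by (intro sum.cong) (simp_all add: interp_def algebra_simps)
  then show ?thesis
    by (simp add: sum.distrib sum_distrib_left)
qed

lemma sum_interp:
  "(\<Sum>j\<in>A. interp l x y j) = (1 - l) * (\<Sum>j\<in>A. x j) + l * (\<Sum>j\<in>A. y j)"
  using sum_mult_interp [where c = "\<lambda>_. 1"] by simp

lemma dyn_ok_interp:
  assumes "dyn_ok M t Tprev W T1 P1" "dyn_ok M t Tprev W T2 P2"
  shows "dyn_ok M t Tprev W (interp l T1 T2) (interp l P1 P2)"
  unfolding dyn_ok_def
proof (intro allI impI)
  fix r assume r: "r < meq M t"
  let ?lhs = "\<lambda>T P. (\<Sum>j<nz M. Aeq1 M t r j * Tprev j) + (\<Sum>j<nz M. Aeq2 M t r j * T j)
      + (\<Sum>j<nz M. Aeq3 M t r j * P j) + (\<Sum>k<2. Aeq4 M t r k * W k)"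
  have "?lhs T1 P1 = beq M t r" "?lhs T2 P2 = beq M t r"
    using assms r unfolding dyn_ok_def by simp_all
  moreover have "?lhs (interp l T1 T2) (interp l P1 P2) = (1 - l) * ?lhs T1 P1 + l * ?lhs T2 P2"
    unfolding sum_mult_interp by (simp add: algebra_simps)
  ultimately show "?lhs (interp l T1 T2) (interp l P1 P2) = beq M t r"
    by (simp add: algebra_simps)
qed

lemma lim_ok_interp:
  assumes "lim_ok M t T1 P1" "lim_ok M t T2 P2" "0 \<le> l" "l \<le> 1"
  shows "lim_ok M t (interp l T1 T2) (interp l P1 P2)"
  unfolding lim_ok_def
proof (intro allI impI)
  fix r assume r: "r < mieq M t"
  let ?lhs = "\<lambda>T P. (\<Sum>j<nz M. Aieq1 M t r j * T j) + (\<Sum>j<nz M. Aieq2 M t r j * P j)"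
  have "(1 - l) * ?lhs T1 P1 \<le> (1 - l) * bieq M t r" "l * ?lhs T2 P2 \<le> l * bieq M t r"
    using assms r unfolding lim_ok_def by (simp_all add: mult_left_mono)
  then show "?lhs (interp l T1 T2) (interp l P1 P2) \<le> bieq M t r"
    unfolding sum_mult_interp by (simp add: algebra_simps)
qed

lemma Taff_interp:
  assumes "T1 \<in> Taff n q G g" "T2 \<in> Taff n q G g" "0 \<le> l" "l \<le> 1"
  shows "interp l T1 T2 \<in> Taff n q G g"
proof -
  obtain z1 where z1: "\<forall>j<q. \<bar>z1 j\<bar> \<le> 1" "\<forall>i<n. T1 i = (\<Sum>j<q. G i j * z1 j) + g i"
    using assms(1) unfolding Taff_def by blast
  obtain z2 where z2: "\<forall>j<q. \<bar>z2 j\<bar> \<le> 1" "\<forall>i<n. T2 i = (\<Sum>j<q. G i j * z2 j) + g i"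
    using assms(2) unfolding Taff_def by blast
  have "\<bar>interp l z1 z2 j\<bar> \<le> 1" if "j < q" for j
  proof -
    have "\<bar>interp l z1 z2 j\<bar> \<le> (1 - l) * \<bar>z1 j\<bar> + l * \<bar>z2 j\<bar>"
      using abs_triangle_ineq [of "(1 - l) * z1 j" "l * z2 j"] assms(3,4)
      by (simp add: interp_def abs_mult)
    also have "\<dots> \<le> (1 - l) * 1 + l * 1"
      using z1(1) z2(1) that assms(3,4) by (intro add_mono mult_left_mono) auto
    finally show ?thesis by simp
  qed
  moreover have "\<forall>i<n. interp l T1 T2 i = (\<Sum>j<q. G i j * interp l z1 z2 j) + g i"
    using z1(2) z2(2) unfolding sum_mult_interp by (simp add: interp_def algebra_simps)
  ultimately show ?thesis unfolding Taff_def by blast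
qed

lemma Utilde_Taff_interp:
  assumes "(T1, P1) \<in> Utilde M t Tprev W (Taff (nz M) q G g)"
    and "(T2, P2) \<in> Utilde M t Tprev W (Taff (nz M) q G g)"
    and "0 \<le> l" "l \<le> 1"
  shows "(interp l T1 T2, interp l P1 P2) \<in> Utilde M t Tprev W (Taff (nz M) q G g)"
  using assms dyn_ok_interp lim_ok_interp Taff_interp
  unfolding Utilde_def step_ok_def by auto

lemma interpolation_weight:
  fixes lo hi p :: real
  assumes "lo \<le> p" "p \<le> hi" "lo < hi"
  shows "0 \<le> (p - lo) / (hi - lo)" "(p - lo) / (hi - lo) \<le> 1"
    and "(1 - (p - lo) / (hi - lo)) * lo + (p - lo) / (hi - lo) * hi = p"
proof -
  let ?w = "(p - lo) / (hi - lo)"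
  have "(1 - ?w) * lo + ?w * hi = lo + ?w * (hi - lo)"
    by (simp add: left_diff_distrib right_diff_distrib)
  also have "\<dots> = p"
    using assms(3) by simp
  finally show "(1 - ?w) * lo + ?w * hi = p" .
qed (use assms in simp_all)

theorem proposition2:
  fixes NB NT t :: nat
    and M :: "nat \<Rightarrow> hvac_model"
    and q :: "nat \<Rightarrow> nat"
    and \<Gamma> :: "nat \<Rightarrow> nat \<Rightarrow> nat \<Rightarrow> real" and \<gamma> :: "nat \<Rightarrow> nat \<Rightarrow> real"
    and Tprev W Tu Pu Td Pd T P :: "nat \<Rightarrow> nat \<Rightarrow> real"
    and Preg lam :: real
  assumes ht: "1 \<le> t" "t \<le> NT"
    and hW: "\<forall>b<NB. W b \<in> Wbox (M b) t"
    and haff: "\<forall>b<NB. Taff (nz (M b)) (q b) (\<Gamma> b) (\<gamma> b) \<subseteq> rch (M b) NT t"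
    and hup: "\<forall>b<NB. (Tu b, Pu b) \<in> Utilde (M b) t (Tprev b) (W b) (Taff (nz (M b)) (q b) (\<Gamma> b) (\<gamma> b))"
    and hdn: "\<forall>b<NB. (Td b, Pd b) \<in> Utilde (M b) t (Tprev b) (W b) (Taff (nz (M b)) (q b) (\<Gamma> b) (\<gamma> b))"
    and hopt: "\<forall>b<NB. \<forall>T1 P1 T2 P2.
        (T1, P1) \<in> Utilde (M b) t (Tprev b) (W b) (Taff (nz (M b)) (q b) (\<Gamma> b) (\<gamma> b)) \<longrightarrow>
        (T2, P2) \<in> Utilde (M b) t (Tprev b) (W b) (Taff (nz (M b)) (q b) (\<Gamma> b) (\<gamma> b)) \<longrightarrow>
        (\<Sum>i<nz (M b). P1 i) - (\<Sum>i<nz (M b). P2 i)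
          \<le> (\<Sum>i<nz (M b). Pu b i) - (\<Sum>i<nz (M b). Pd b i)"
    and hgap: "(\<Sum>b<NB. \<Sum>i<nz (M b). Pd b i) < (\<Sum>b<NB. \<Sum>i<nz (M b). Pu b i)"
    and hreg: "(\<Sum>b<NB. \<Sum>i<nz (M b). Pd b i) \<le> Preg" "Preg \<le> (\<Sum>b<NB. \<Sum>i<nz (M b). Pu b i)"
    and hlam: "lam = (Preg - (\<Sum>b<NB. \<Sum>i<nz (M b). Pd b i))
                 / ((\<Sum>b<NB. \<Sum>i<nz (M b). Pu b i) - (\<Sum>b<NB. \<Sum>i<nz (M b). Pd b i))"
    and hT: "\<forall>b<NB. T b = (\<lambda>i. (1 - lam) * Td b i + lam * Tu b i)"
    and hP: "\<forall>b<NB. P b = (\<lambda>i. (1 - lam) * Pd b i + lam * Pu b i)"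
  shows "0 \<le> lam \<and> lam \<le> 1
    \<and> (\<forall>b<NB. (T b, P b) \<in> Utilde (M b) t (Tprev b) (W b) (Taff (nz (M b)) (q b) (\<Gamma> b) (\<gamma> b)))
    \<and> (\<Sum>b<NB. \<Sum>i<nz (M b). P b i) = Preg
    \<and> (\<forall>b<NB. T b \<in> rch (M b) NT t)"
proof -
  note weight = interpolation_weight [OF hreg hgap, folded hlam]
  have TP: "T b = interp lam (Td b) (Tu b)" "P b = interp lam (Pd b) (Pu b)" if "b < NB" for b
    using hT hP that by (simp_all add: interp_def)
  have feasible: "\<forall>b<NB. (T b, P b) \<in> Utilde (M b) t (Tprev b) (W b) (Taff (nz (M b)) (q b) (\<Gamma> b) (\<gamma> b))"
    using hdn hup weight(1,2) by (simp add: TP Utilde_Taff_interp)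
  have "(\<Sum>b<NB. \<Sum>i<nz (M b). P b i)
      = (\<Sum>b<NB. interp lam (\<lambda>b. \<Sum>i<nz (M b). Pd b i) (\<lambda>b. \<Sum>i<nz (M b). Pu b i) b)"
    by (intro sum.cong) (simp_all add: TP sum_interp, simp add: interp_def)
  also have "\<dots> = (1 - lam) * (\<Sum>b<NB. \<Sum>i<nz (M b). Pd b i) + lam * (\<Sum>b<NB. \<Sum>i<nz (M b). Pu b i)"
    by (rule sum_interp)
  also have "\<dots> = Preg"
    using weight(3) hlam by simp
  finally show ?thesis
    using weight(1,2) feasible haff unfolding Utilde_def by blast
qed

end
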